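(* Let $P=[p_{f,k}]$, $f\in[0,F)$, $k\in[0,K)$, be a $(K,F,S)$ MRA. Consider an MADC model with $K$ reducer nodes indexed by $[0,K)$ and $F$ batches of files $B_0,\dots,B_{F-1}$, with some number $\Lambda$ of mapper nodes and computation load $r$, in which the batches are assigned to the mapper nodes and the mapper nodes are connected to the reducer nodes in such a way that every reducer node $k\in[0,K)$ has access to all batches in the set $$R_k=\{B_f:\ p_{f,k}=*,\ f\in[0,F)\}.$$ Then the communication load $$L(r)=\frac{S}{KF}+\sum_{g=2}^{K}\frac{S_g}{KF(g-1)}$$ is achievable for this MADC model, where $S_g$ denotes the number of integers in $[0,S)$ that appear exactly $g$ times in $P$.
   Context: Notation: $[0,n)=\{0,1,\dots,n-1\}$, $[n]=\{1,\dots,n\}$. MADC (multi-access distributed computing) model: There are $\Lambda$ mapper nodes indexed by $[0,\Lambda)$ and $K$ reducer nodes indexed by $[0,K)$. There are $N$ input files $w_0,\dots,w_{N-1}\in\mathbb{F}_{2^d}$ and $Q$ output functions $\phi_q:\mathbb{F}_{2^d}^N\to\mathbb{F}_{2^b}$, $q\in[0,Q)$, of the form $\phi_q(w_0,\dots,w_{N-1})=h_q(v_{q,0},\dots,v_{q,N-1})$, where $v_{q,n}=g_{q,n}(w_n)\in\mathbb{F}_{2^t}$ is called an intermediate value (IV). Each reducer node $k$ is assigned a set $\mathcal W_k\subseteq[0,Q)$ of $Q/K$ output functions, these sets being pairwise disjoint. The files are partitioned into $F$ disjoint batches of $N/F$ files each. Map phase: each mapper node $\lambda$ stores a set $M_\lambda$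 of batches and computes all IVs $v_{q,n}$, $q\in[0,Q)$, for all files $w_n$ in its stored batches. Each reducer node is connected to a set of mapper nodes and has access to every batch stored at any mapper node it is connected to, together with all IVs computed from those batches. Shuffle phase: each reducer node $k$ broadcasts to all other reducer nodes, error-free, a message $\mathbf X_k$ of $l_k$ bits that is a function of the IVs it has access to. Reduce phase: each reducer node $k$ must recover all IVs $v_{q,n}$ with $q\in\mathcal W_k$, $n\in[0,N)$, from the received messages and the IVs it has access to. The computation load is $r=\sum_{\lambda=0}^{\Lambda-1}|M_\lambda|/F$ and the communication load is $L=\sum_{k=0}^{K-1}l_k/(QNt)$. A communication load $L$ is achievable for a given model (given batches, mapper storage and mapper–reducer connections) if there exists a shuffle/reduce scheme satisfying all decoding requirements that attains $L$ (for a suitable choice of the number of files per batch, the number of functions per reducer, and the IV length $t$). Map-Reduce Array (MRA): For positive integers $K,F,S$, an $F\times K$ array $P=[p_{f,k}]$, $f\in[0,F)$, $k\in[0,K)$, whose entries are either the symbol $*$ or integers from $[0,S)$, with every integer of $[0,S)$ occurring in $P$, is a $(K,F,S)$ MRA if: (C1) each integer occurs more than once in $P$; (C2) whenever two distinct entries satisfy $p_{f_1,k_1}=p_{f_2,k_2}=s$ with $s$ an integer, then $f_1\neq f_2$, $k_1\neq k_2$, and $p_{f_1,k_2}=p_{f_2,k_1}=*$. It is a $g$-regular MRA (for a constant $g\ge 2$) if it satisfies (C2) and every integer occurs exactly $g$ times. *)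

theory Defs
  imports "HOL-Analysis.Analysis"
begin

text \<open>An F x K array with entries in nat option; None encodes the symbol *,
  Some s encodes the integer s. Rows f in [0,F), columns k in [0,K).\<close>

definition occ :: "nat \<Rightarrow> nat \<Rightarrow> (nat \<Rightarrow> nat \<Rightarrow> nat option) \<Rightarrow> nat \<Rightarrow> (nat \<times> nat) set" where
  "occ K F P s = {(f, k). f < F \<and> k < K \<and> P f k = Some s}"

definition is_MRA :: "nat \<Rightarrow> nat \<Rightarrow> nat \<Rightarrow> (nat \<Rightarrow> nat \<Rightarrow> nat option) \<Rightarrow> bool" where
  "is_MRA K F S P \<longleftrightarrow>
     0 < K \<and> 0 < F \<and> 0 < S \<and>
     (\<forall>f<F. \<forall>k<K. \<forall>s. P f k = Some s \<longrightarrow> s < S) \<and>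
     (\<forall>s<S. occ K F P s \<noteq> {}) \<and>
     (\<forall>s<S. card (occ K F P s) > 1) \<and>
     (\<forall>f1<F. \<forall>k1<K. \<forall>f2<F. \<forall>k2<K. \<forall>s.
        (f1, k1) \<noteq> (f2, k2) \<and> P f1 k1 = Some s \<and> P f2 k2 = Some s \<longrightarrow>
        f1 \<noteq> f2 \<and> k1 \<noteq> k2 \<and> P f1 k2 = None \<and> P f2 k1 = None)"

definition S_count :: "nat \<Rightarrow> nat \<Rightarrow> nat \<Rightarrow> (nat \<Rightarrow> nat \<Rightarrow> nat option) \<Rightarrow> nat \<Rightarrow> nat" where
  "S_count K F S P g = card {s. s < S \<and> card (occ K F P s) = g}"

text \<open>MADC model data: Lam mapper nodes, M lam = set of batch indices stored at
  mapper lam (subset of [0,F)), Conn k = set of mappers connected to reducer k.\<close>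
definition madc_model :: "nat \<Rightarrow> nat \<Rightarrow> nat \<Rightarrow> (nat \<Rightarrow> nat set) \<Rightarrow> (nat \<Rightarrow> nat set) \<Rightarrow> bool" where
  "madc_model K F Lam M Conn \<longleftrightarrow>
     (\<forall>lam<Lam. M lam \<subseteq> {..<F}) \<and> (\<forall>k<K. Conn k \<subseteq> {..<Lam})"

definition comp_load :: "nat \<Rightarrow> nat \<Rightarrow> (nat \<Rightarrow> nat set) \<Rightarrow> real" where
  "comp_load F Lam M = (\<Sum>lam<Lam. real (card (M lam))) / real F"

definition access :: "(nat \<Rightarrow> nat set) \<Rightarrow> (nat \<Rightarrow> nat set) \<Rightarrow> nat \<Rightarrow> nat set" where
  "access M Conn k = (\<Union>lam\<in>Conn k. M lam)"

text \<open>With nb files per batch (N = F*nb files), file n belongs to batch n div nb.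
  IVs are modelled as a function v q n giving a bit string of length t.\<close>
definition mask :: "nat \<Rightarrow> nat \<Rightarrow> nat \<Rightarrow> nat set \<Rightarrow> (nat \<Rightarrow> nat \<Rightarrow> bool list) \<Rightarrow> nat \<Rightarrow> nat \<Rightarrow> bool list" where
  "mask Q N nb A v = (\<lambda>q n. if q < Q \<and> n < N \<and> n div nb \<in> A then v q n else [])"

definition madc_achievable ::
  "nat \<Rightarrow> nat \<Rightarrow> nat \<Rightarrow> (nat \<Rightarrow> nat set) \<Rightarrow> (nat \<Rightarrow> nat set) \<Rightarrow> real \<Rightarrow> bool" where
  "madc_achievable K F Lam M Conn L \<longleftrightarrow>
    (\<exists>nb qk t. 0 < nb \<and> 0 < qk \<and> 0 < t \<and>
      (let N = F * nb; Q = K * qk in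
       \<forall>W :: nat \<Rightarrow> nat set.
         (\<forall>k<K. W k \<subseteq> {..<Q} \<and> card (W k) = qk) \<and>
         (\<forall>k1<K. \<forall>k2<K. k1 \<noteq> k2 \<longrightarrow> W k1 \<inter> W k2 = {}) \<longrightarrow>
         (\<exists>(l :: nat \<Rightarrow> nat)
            (enc :: nat \<Rightarrow> (nat \<Rightarrow> nat \<Rightarrow> bool list) \<Rightarrow> bool list)
            (dec :: nat \<Rightarrow> (nat \<Rightarrow> bool list) \<Rightarrow> (nat \<Rightarrow> nat \<Rightarrow> bool list) \<Rightarrow> nat \<Rightarrow> nat \<Rightarrow> bool list).
           (\<forall>v :: nat \<Rightarrow> nat \<Rightarrow> bool list. (\<forall>q<Q. \<forall>n<N. length (v q n) = t) \<longrightarrow>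
              (\<forall>k<K. length (enc k (mask Q N nb (access M Conn k) v)) = l k) \<and>
              (\<forall>k<K. \<forall>q\<in>W k. \<forall>n<N.
                 dec k (\<lambda>j. if j < K \<and> j \<noteq> k then enc j (mask Q N nb (access M Conn j) v) else [])
                       (mask Q N nb (access M Conn k) v) q n = v q n)) \<and>
           L = real (\<Sum>k<K. l k) / (real Q * real N * real t))))"

end

theory Submission
  imports Defs
begin

text \<open>Let an integer s of the MRA occur g times, in columns k_1, ..., k_g and rows f_1, ...,
  f_g. Reducer k_i cannot access batch f_i, but by (C2) it can access every f_j with j \<noteq> i.
  Reducer k_i's missing intermediate value on batch f_i is cut into g - 1 segments, one
  addressed to each other k_j; reducer k_j broadcasts the sum modulo 2^(segment length) of
  the g - 1 segments addressed to it, all of which it can compute, and k_i recovers its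
  segment by subtracting the other summands, which it can compute as well. With IVs of
  length t this costs g t/(g - 1) bits per integer, i.e. 1/(KF) + 1/(KF(g - 1)) after
  normalisation; one file per batch, one function per reducer and t = K! make the segment
  lengths integral.\<close>

definition bits :: "nat \<Rightarrow> int \<Rightarrow> bool list" where
  "bits n a = map (bit a) [0..<n]"

abbreviation int_of_bits :: "bool list \<Rightarrow> int" where
  "int_of_bits bs \<equiv> horner_sum of_bool 2 bs"

lemma length_bits [simp]: "length (bits n a) = n"
  by (simp add: bits_def)

lemma bits_int_of_bits: "bits (length bs) (int_of_bits bs) = bs"
  unfolding bits_def by (rule nth_equalityI) (simp_all add: bit_horner_sum_bit_iff)

lemma int_of_bits_bits: "int_of_bits (bits n a) = take_bit n a"
  by (simp add: bits_def horner_sum_bit_eq_take_bit)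

lemma bits_take_bit: "bits n (take_bit n a) = bits n a"
  by (simp add: bits_def bit_take_bit_iff)

lemma bits_take_bit_diff: "bits n (take_bit n a - b) = bits n (a - b)"
proof -
  have "take_bit n (take_bit n a - b) = take_bit n (a - b)"
    by (simp add: take_bit_eq_mod mod_diff_left_eq)
  then show ?thesis
    by (metis bits_take_bit)
qed

lemma bits_cancel_summand:
  "bits (length xs) (int_of_bits (bits (length xs) (int_of_bits xs + b)) - b) = xs"
  by (simp add: int_of_bits_bits bits_take_bit_diff bits_int_of_bits)

definition position :: "'a list \<Rightarrow> 'a \<Rightarrow> nat" where
  "position xs x = length (takeWhile (\<lambda>y. y \<noteq> x) xs)"

lemma position_nth: "distinct xs \<Longrightarrow> p < length xs \<Longrightarrow> position xs (xs ! p) = p"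
proof (induction xs arbitrary: p)
  case Nil
  then show ?case by simp
next
  case (Cons a xs)
  show ?case
  proof (cases p)
    case 0
    then show ?thesis by (simp add: position_def)
  next
    case (Suc p')
    then have "xs ! p' \<noteq> a" using Cons.prems by (auto simp: nth_mem)
    then show ?thesis using Cons Suc by (simp add: position_def)
  qed
qed

lemma position_less_length: "x \<in> set xs \<Longrightarrow> position xs x < length xs"
  unfolding position_def by (induction xs) auto

lemma concat_map_take_drop:
  "concat (map (\<lambda>p. take c (drop (p * c) xs)) [0..<n]) = take (n * c) xs"
proof (induction n)
  case 0
  then show ?case by simp
next
  case (Suc n)
  have "Suc n * c = n * c + c" by simp
  then show ?case using Suc by (simp add: take_add del: mult_Suc)
qed

lemma take_drop_concat_map_upt:
  assumes "s < S"
  shows "take (length (f s)) (drop (\<Sum>s'<s. length (f s')) (concat (map f [0..<S]))) = f s"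
proof -
  have "[0..<S] = [0..<s] @ [s..<S]"
    using upt_add_eq_append[of 0 s "S - s"] assms by simp
  also have "[s..<S] = s # [Suc s..<S]"
    using assms by (rule upt_conv_Cons)
  finally have "[0..<S] = [0..<s] @ s # [Suc s..<S]" .
  moreover have "length (concat (map f [0..<s])) = (\<Sum>s'<s. length (f s'))"
    by (simp add: length_concat atLeast0LessThan[symmetric] interv_sum_list_conv_sum_set_nat)
  ultimately show ?thesis by simp
qed

lemma sum_group_by_value:
  fixes S :: nat and h :: "nat \<Rightarrow> 'a :: comm_semiring_1"
  assumes "\<And>s. s < S \<Longrightarrow> a \<le> g s \<and> g s \<le> b"
  shows "(\<Sum>s<S. h (g s)) = (\<Sum>n = a..b. of_nat (card {s. s < S \<and> g s = n}) * h n)"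
proof -
  have "(\<Sum>s<S. h (g s)) = (\<Sum>n = a..b. \<Sum>s\<in>{s \<in> {..<S}. g s = n}. h (g s))"
    using assms by (intro sum.group[symmetric]) auto
  also have "\<dots> = (\<Sum>n = a..b. of_nat (card {s. s < S \<and> g s = n}) * h n)"
  proof (rule sum.cong[OF refl])
    fix n
    have "(\<Sum>s\<in>{s \<in> {..<S}. g s = n}. h (g s)) = (\<Sum>s\<in>{s \<in> {..<S}. g s = n}. h n)"
      by (rule sum.cong) simp_all
    then show "(\<Sum>s\<in>{s \<in> {..<S}. g s = n}. h (g s)) = of_nat (card {s. s < S \<and> g s = n}) * h n"
      by simp
  qed
  finally show ?thesis .
qed

text \<open>With one file per batch and one function per reducer, the admissible assignments are
  W k = {w k} for maps w into [0,K), so it suffices to provide a scheme for each such w.\<close>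

lemma madc_achievable_one_function_per_reducer:
  fixes l :: "(nat \<Rightarrow> nat) \<Rightarrow> nat \<Rightarrow> nat"
    and enc :: "(nat \<Rightarrow> nat) \<Rightarrow> nat \<Rightarrow> (nat \<Rightarrow> nat \<Rightarrow> bool list) \<Rightarrow> bool list"
    and dec :: "(nat \<Rightarrow> nat) \<Rightarrow> nat \<Rightarrow> (nat \<Rightarrow> bool list) \<Rightarrow> (nat \<Rightarrow> nat \<Rightarrow> bool list)
      \<Rightarrow> nat \<Rightarrow> nat \<Rightarrow> bool list"
  assumes "0 < t"
    and length_enc: "\<And>w v k. \<forall>k<K. w k < K \<Longrightarrow> \<forall>q<K. \<forall>n<F. length (v q n) = t \<Longrightarrow> k < K \<Longrightarrow>
      length (enc w k (mask K F 1 (access M Conn k) v)) = l w k"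
    and dec_correct: "\<And>w v k n. \<forall>k<K. w k < K \<Longrightarrow> \<forall>q<K. \<forall>n<F. length (v q n) = t \<Longrightarrow>
      k < K \<Longrightarrow> n < F \<Longrightarrow>
      dec w k (\<lambda>j. if j < K \<and> j \<noteq> k then enc w j (mask K F 1 (access M Conn j) v) else [])
        (mask K F 1 (access M Conn k) v) (w k) n = v (w k) n"
    and load: "\<And>w. \<forall>k<K. w k < K \<Longrightarrow> L = real (\<Sum>k<K. l w k) / (real K * real F * real t)"
  shows "madc_achievable K F Lam M Conn L"
  unfolding madc_achievable_def Let_def
proof (rule exI[of _ 1], rule exI[of _ 1], rule exI[of _ t], intro conjI allI impI;
    (unfold mult_1_right)?)
  fix W :: "nat \<Rightarrow> nat set"
  assume W: "(\<forall>k<K. W k \<subseteq> {..<K} \<and> card (W k) = 1) \<and>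
    (\<forall>k1<K. \<forall>k2<K. k1 \<noteq> k2 \<longrightarrow> W k1 \<inter> W k2 = {})"
  define w where "w k = the_elem (W k)" for k
  have W_eq: "W k = {w k}" if "k < K" for k
    using W that unfolding w_def by (metis card_1_singletonE the_elem_eq)
  then have w: "\<forall>k<K. w k < K"
    using W by auto
  show "\<exists>l (enc :: nat \<Rightarrow> (nat \<Rightarrow> nat \<Rightarrow> bool list) \<Rightarrow> bool list) dec.
      (\<forall>v :: nat \<Rightarrow> nat \<Rightarrow> bool list. (\<forall>q<K. \<forall>n<F. length (v q n) = t) \<longrightarrow>
         (\<forall>k<K. length (enc k (mask K F 1 (access M Conn k) v)) = l k) \<and>
         (\<forall>k<K. \<forall>q\<in>W k. \<forall>n<F.
            dec k (\<lambda>j. if j < K \<and> j \<noteq> k then enc j (mask K F 1 (access M Conn j) v) else [])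
              (mask K F 1 (access M Conn k) v) q n = v q n)) \<and>
      L = real (\<Sum>k<K. l k) / (real K * real F * real t)"
    by (intro exI[of _ "l w"] exI[of _ "enc w"] exI[of _ "dec w"] conjI allI impI ballI
        load[OF w] length_enc[OF w])
      (simp_all only: W_eq singleton_iff dec_correct[OF w])
qed (simp_all add: \<open>0 < t\<close>)

locale mra =
  fixes K F S :: nat and P :: "nat \<Rightarrow> nat \<Rightarrow> nat option"
  assumes is_MRA: "is_MRA K F S P"
begin

definition cols :: "nat \<Rightarrow> nat set" where
  "cols s = {k. k < K \<and> (\<exists>f<F. P f k = Some s)}"

definition row :: "nat \<Rightarrow> nat \<Rightarrow> nat" where
  "row s k = (THE f. f < F \<and> P f k = Some s)"

lemma entry_less: "f < F \<Longrightarrow> k < K \<Longrightarrow> P f k = Some s \<Longrightarrow> s < S"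
  using is_MRA unfolding is_MRA_def by blast

lemma repeated_entry:
  assumes "f1 < F" "k1 < K" "f2 < F" "k2 < K" "(f1, k1) \<noteq> (f2, k2)"
    and "P f1 k1 = Some s" "P f2 k2 = Some s"
  shows "f1 \<noteq> f2 \<and> k1 \<noteq> k2 \<and> P f1 k2 = None \<and> P f2 k1 = None"
  using is_MRA assms unfolding is_MRA_def by blast

lemma K_pos: "0 < K" and F_pos: "0 < F"
  using is_MRA unfolding is_MRA_def by simp_all

lemma cols_subset: "cols s \<subseteq> {..<K}"
  unfolding cols_def by auto

lemma finite_cols [simp]: "finite (cols s)"
  using cols_subset finite_subset by blast

lemma row:
  assumes "k \<in> cols s"
  shows "row s k < F" and "P (row s k) k = Some s"
proof -
  obtain f where f: "f < F" "P f k = Some s" and "k < K"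
    using assms unfolding cols_def by auto
  then have "\<exists>!f. f < F \<and> P f k = Some s"
    using repeated_entry[of _ k _ k s] by blast
  then have "row s k < F \<and> P (row s k) k = Some s"
    unfolding row_def by (rule theI')
  then show "row s k < F" and "P (row s k) k = Some s" by auto
qed

lemma row_eqI:
  assumes "f < F" "k < K" "P f k = Some s"
  shows "row s k = f"
proof -
  have "k \<in> cols s"
    using assms unfolding cols_def by auto
  then show ?thesis
    using assms row[of k s] repeated_entry[of f k "row s k" k s] by auto
qed

lemma card_cols: "card (cols s) = card (occ K F P s)"
proof -
  have "inj_on snd (occ K F P s)"
    unfolding inj_on_def occ_def using repeated_entry by fastforce
  moreover have "snd ` occ K F P s = cols s"
    unfolding occ_def cols_def by (auto simp: image_def)
  ultimately show ?thesis by (metis card_image)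
qed

lemma card_occ_bounds:
  assumes "s < S"
  shows "2 \<le> card (occ K F P s) \<and> card (occ K F P s) \<le> K"
proof -
  have "1 < card (occ K F P s)"
    using is_MRA assms unfolding is_MRA_def by blast
  moreover have "card (cols s) \<le> K"
    using card_mono[OF _ cols_subset] by simp
  ultimately show ?thesis
    using card_cols by simp
qed

lemma row_star:
  assumes i: "i \<in> cols s" and j: "j \<in> cols s" and "i \<noteq> j"
  shows "P (row s i) j = None"
proof -
  have "i < K" "j < K"
    using i j cols_subset by auto
  moreover have "(row s i, i) \<noteq> (row s j, j)"
    using \<open>i \<noteq> j\<close> by simp
  ultimately show ?thesis
    using repeated_entry[OF row(1)[OF i] \<open>i < K\<close> row(1)[OF j] \<open>j < K\<close>] row(2)[OF i] row(2)[OF j]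
    by blast
qed

end

locale mra_code = mra +
  fixes w :: "nat \<Rightarrow> nat" and t :: nat
  assumes demand_less: "k < K \<Longrightarrow> w k < K"
    and segment_dvd: "s < S \<Longrightarrow> card (occ K F P s) - 1 dvd t"
begin

definition seg_len :: "nat \<Rightarrow> nat" where
  "seg_len s = t div (card (occ K F P s) - 1)"

definition helpers :: "nat \<Rightarrow> nat \<Rightarrow> nat list" where
  "helpers s i = filter (\<lambda>j. j \<noteq> i) (sorted_list_of_set (cols s))"

definition piece :: "(nat \<Rightarrow> nat \<Rightarrow> bool list) \<Rightarrow> nat \<Rightarrow> nat \<Rightarrow> nat \<Rightarrow> bool list" where
  "piece v s i j =
     take (seg_len s) (drop (position (helpers s i) j * seg_len s) (v (w i) (row s i)))"

definition coded_sum :: "(nat \<Rightarrow> nat \<Rightarrow> bool list) \<Rightarrow> nat \<Rightarrow> nat \<Rightarrow> int" where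
  "coded_sum v s j = (\<Sum>i\<in>cols s - {j}. int_of_bits (piece v s i j))"

definition encode :: "nat \<Rightarrow> (nat \<Rightarrow> nat \<Rightarrow> bool list) \<Rightarrow> bool list" where
  "encode j v =
     concat (map (\<lambda>s. if j \<in> cols s then bits (seg_len s) (coded_sum v s j) else []) [0..<S])"

definition offset :: "nat \<Rightarrow> nat \<Rightarrow> nat" where
  "offset j s = (\<Sum>s'<s. if j \<in> cols s' then seg_len s' else 0)"

definition decode_piece ::
  "(nat \<Rightarrow> bool list) \<Rightarrow> (nat \<Rightarrow> nat \<Rightarrow> bool list) \<Rightarrow> nat \<Rightarrow> nat \<Rightarrow> nat \<Rightarrow> bool list" where
  "decode_piece m v s k j = bits (seg_len s)
     (int_of_bits (take (seg_len s) (drop (offset j s) (m j)))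
      - (\<Sum>i\<in>cols s - {j, k}. int_of_bits (piece v s i j)))"

definition decode ::
  "nat \<Rightarrow> (nat \<Rightarrow> bool list) \<Rightarrow> (nat \<Rightarrow> nat \<Rightarrow> bool list) \<Rightarrow> nat \<Rightarrow> nat \<Rightarrow> bool list" where
  "decode k m v q n =
     (if n < F \<and> P n k \<noteq> None
      then concat (map (decode_piece m v (the (P n k)) k) (helpers (the (P n k)) k))
      else v q n)"

lemma seg_len_mult: "s < S \<Longrightarrow> (card (occ K F P s) - 1) * seg_len s = t"
  using segment_dvd unfolding seg_len_def by simp

lemma helpers:
  assumes "k \<in> cols s"
  shows "distinct (helpers s k)" and "set (helpers s k) = cols s - {k}"
    and "length (helpers s k) = card (occ K F P s) - 1"
proof -
  show "distinct (helpers s k)" and "set (helpers s k) = cols s - {k}"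
    unfolding helpers_def by auto
  then have "length (helpers s k) = card (cols s - {k})"
    by (metis distinct_card)
  then show "length (helpers s k) = card (occ K F P s) - 1"
    using assms card_cols by simp
qed

lemma length_missing_value:
  assumes "\<forall>q<K. \<forall>n<F. length (v q n) = t" "s < S" "i \<in> cols s"
  shows "length (v (w i) (row s i)) = (card (occ K F P s) - 1) * seg_len s"
proof -
  have "w i < K" and "row s i < F"
    using assms(3) demand_less cols_subset row(1) by auto
  then show ?thesis
    using assms(1) seg_len_mult[OF assms(2)] by simp
qed

lemma length_piece:
  assumes lens: "\<forall>q<K. \<forall>n<F. length (v q n) = t"
    and s: "s < S" and i: "i \<in> cols s" and j: "j \<in> cols s - {i}"
  shows "length (piece v s i j) = seg_len s"
proof -
  have "position (helpers s i) j < card (occ K F P s) - 1"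
    using position_less_length[of j "helpers s i"] helpers[OF i] j by auto
  then have "position (helpers s i) j * seg_len s + seg_len s \<le> (card (occ K F P s) - 1) * seg_len s"
    by (metis add.commute mult_Suc Suc_leI mult_le_mono1)
  then show ?thesis
    unfolding piece_def using length_missing_value[OF lens s i] by simp
qed

lemma piece_mask:
  assumes accs: "\<forall>k<K. {f. f < F \<and> P f k = None} \<subseteq> A k"
    and i: "i \<in> cols s" and j: "j \<in> cols s" and "i \<noteq> j"
  shows "piece (mask K F 1 (A j) v) s i j' = piece v s i j'"
proof -
  have "row s i \<in> A j"
    using accs j cols_subset row(1)[OF i] row_star[OF i j \<open>i \<noteq> j\<close>] by auto
  then have "mask K F 1 (A j) v (w i) (row s i) = v (w i) (row s i)"
    using demand_less i cols_subset row(1)[OF i] unfolding mask_def by auto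
  then show ?thesis
    unfolding piece_def by simp
qed

lemma length_encode: "length (encode j v) = offset j S"
  unfolding encode_def offset_def
  by (simp add: length_concat atLeast0LessThan[symmetric] interv_sum_list_conv_sum_set_nat
      if_distrib cong: if_cong)

lemma take_drop_encode:
  assumes "s < S" and "j \<in> cols s"
  shows "take (seg_len s) (drop (offset j s) (encode j v)) = bits (seg_len s) (coded_sum v s j)"
proof -
  define f where "f s = (if j \<in> cols s then bits (seg_len s) (coded_sum v s j) else [])" for s
  have "length (f s') = (if j \<in> cols s' then seg_len s' else 0)" for s'
    unfolding f_def by simp
  then show ?thesis
    using take_drop_concat_map_upt[OF \<open>s < S\<close>, of f] \<open>j \<in> cols s\<close>
    unfolding encode_def offset_def f_def by simp
qed

lemma decode_piece_correct:
  assumes lens: "\<forall>q<K. \<forall>n<F. length (v q n) = t"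
    and accs: "\<forall>k<K. {f. f < F \<and> P f k = None} \<subseteq> A k"
    and s: "s < S" and k: "k \<in> cols s" and j: "j \<in> cols s - {k}"
    and m: "m j = encode j (mask K F 1 (A j) v)"
  shows "decode_piece m (mask K F 1 (A k) v) s k j = piece v s k j"
proof -
  have "j \<in> cols s" and "k \<noteq> j"
    using j by auto
  define B where "B = (\<Sum>i\<in>cols s - {j, k}. int_of_bits (piece v s i j))"
  have "coded_sum (mask K F 1 (A j) v) s j = coded_sum v s j"
    unfolding coded_sum_def using piece_mask[OF accs _ \<open>j \<in> cols s\<close>] by simp
  also have "\<dots> = int_of_bits (piece v s k j) + B"
  proof -
    have "cols s - {j} = insert k (cols s - {j, k})"
      using k \<open>k \<noteq> j\<close> by auto
    then show ?thesis
      unfolding coded_sum_def B_def by simp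
  qed
  finally have received: "take (seg_len s) (drop (offset j s) (m j))
      = bits (seg_len s) (int_of_bits (piece v s k j) + B)"
    unfolding m take_drop_encode[OF s \<open>j \<in> cols s\<close>] by simp
  \<comment> \<open>the receiver knows every summand but its own, since it sees all other rows\<close>
  have known: "(\<Sum>i\<in>cols s - {j, k}. int_of_bits (piece (mask K F 1 (A k) v) s i j)) = B"
    unfolding B_def using piece_mask[OF accs _ k] by simp
  show ?thesis
    unfolding decode_piece_def received known
    using bits_cancel_summand[of "piece v s k j" B] length_piece[OF lens s k j] by simp
qed

lemma concat_pieces:
  assumes lens: "\<forall>q<K. \<forall>n<F. length (v q n) = t" and s: "s < S" and k: "k \<in> cols s"
  shows "concat (map (piece v s k) (helpers s k)) = v (w k) (row s k)"
proof -
  let ?x = "v (w k) (row s k)" and ?n = "card (occ K F P s) - 1"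
  have "map (piece v s k) (helpers s k) = map (piece v s k \<circ> (!) (helpers s k)) [0..<?n]"
    by (metis helpers(3)[OF k] map_map map_nth)
  also have "\<dots> = map (\<lambda>p. take (seg_len s) (drop (p * seg_len s) ?x)) [0..<?n]"
    using helpers[OF k] by (auto simp: piece_def position_nth)
  finally show ?thesis
    using length_missing_value[OF lens s k] by (simp add: concat_map_take_drop)
qed

lemma decode_correct:
  assumes lens: "\<forall>q<K. \<forall>n<F. length (v q n) = t"
    and accs: "\<forall>k<K. {f. f < F \<and> P f k = None} \<subseteq> A k"
    and k: "k < K" and n: "n < F"
    and m: "\<And>j. j < K \<Longrightarrow> j \<noteq> k \<Longrightarrow> m j = encode j (mask K F 1 (A j) v)"
  shows "decode k m (mask K F 1 (A k) v) (w k) n = v (w k) n"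
proof (cases "P n k")
  case None
  then have "n \<in> A k"
    using accs k n by auto
  then show ?thesis
    using None demand_less k n unfolding decode_def mask_def by simp
next
  case (Some s)
  have s: "s < S" and ks: "k \<in> cols s"
    using Some entry_less k n unfolding cols_def by auto
  have "decode_piece m (mask K F 1 (A k) v) s k j = piece v s k j" if "j \<in> set (helpers s k)" for j
  proof -
    have j: "j \<in> cols s - {k}"
      using that helpers(2)[OF ks] by simp
    then have "m j = encode j (mask K F 1 (A j) v)"
      using m cols_subset by auto
    then show ?thesis
      by (rule decode_piece_correct[OF lens accs s ks j])
  qed
  then have pieces: "map (decode_piece m (mask K F 1 (A k) v) s k) (helpers s k)
      = map (piece v s k) (helpers s k)"
    by (rule map_cong[OF refl])
  have "decode k m (mask K F 1 (A k) v) (w k) n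
      = concat (map (decode_piece m (mask K F 1 (A k) v) s k) (helpers s k))"
    unfolding decode_def using Some n by simp
  also have "\<dots> = concat (map (piece v s k) (helpers s k))"
    by (simp only: pieces)
  also have "\<dots> = v (w k) n"
    using concat_pieces[OF lens s ks] row_eqI[OF n k Some] by simp
  finally show ?thesis .
qed

lemma sum_offset: "(\<Sum>j<K. offset j S) = (\<Sum>s<S. card (occ K F P s) * seg_len s)"
proof -
  have "(\<Sum>j<K. offset j S) = (\<Sum>s<S. \<Sum>j<K. if j \<in> cols s then seg_len s else 0)"
    unfolding offset_def by (rule sum.swap)
  also have "\<dots> = (\<Sum>s<S. card (cols s) * seg_len s)"
    using cols_subset by (simp add: sum.If_cases Int_absorb1)
  finally show ?thesis
    by (simp add: card_cols)
qed

lemma normalized_segment_load: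
  assumes "s < S" and "0 < t"
  shows "real (card (occ K F P s) * seg_len s) / (real K * real F * real t)
    = 1 / (real K * real F) + 1 / (real K * real F * (real (card (occ K F P s)) - 1))"
proof -
  define G where "G = real (card (occ K F P s))"
  have "1 < G"
    using card_occ_bounds[OF assms(1)] unfolding G_def by simp
  have "(G - 1) * real (seg_len s) = real t"
    using seg_len_mult[OF assms(1)] card_occ_bounds[OF assms(1)] unfolding G_def
    by (metis of_nat_1 of_nat_diff of_nat_mult one_le_numeral order_trans)
  then have "real (seg_len s) = real t / (G - 1)"
    using \<open>1 < G\<close> by (simp add: eq_divide_eq mult.commute)
  then have "real (card (occ K F P s) * seg_len s) / (real K * real F * real t)
      = G * (real t / (G - 1)) / (real K * real F * real t)"
    by (simp add: G_def)
  also have "\<dots> = 1 / (real K * real F) + 1 / (real K * real F * (G - 1))"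
  proof -
    have split: "G * (T / (G - 1)) / (D * T) = 1 / D + 1 / (D * (G - 1))"
      if "D \<noteq> 0" "T \<noteq> 0" for D T :: real
      using that \<open>1 < G\<close> by (simp add: field_simps)
    show ?thesis
      by (rule split) (use K_pos F_pos \<open>0 < t\<close> in auto)
  qed
  finally show ?thesis
    unfolding G_def .
qed

lemma normalized_load:
  assumes "0 < t"
  shows "real (\<Sum>j<K. offset j S) / (real K * real F * real t) =
    real S / (real K * real F)
    + (\<Sum>g = 2..K. real (S_count K F S P g) / (real K * real F * (real g - 1)))"
proof -
  let ?D = "real K * real F" and ?g = "\<lambda>s. card (occ K F P s)"
  have "real (\<Sum>j<K. offset j S) / (?D * real t) = (\<Sum>s<S. 1 / ?D + 1 / (?D * (real (?g s) - 1)))"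
    unfolding sum_offset of_nat_sum sum_divide_distrib
    using normalized_segment_load[OF _ assms] by simp
  also have "\<dots> = real S / ?D + (\<Sum>s<S. 1 / (?D * (real (?g s) - 1)))"
    by (simp add: sum.distrib)
  also have "(\<Sum>s<S. 1 / (?D * (real (?g s) - 1)))
      = (\<Sum>g = 2..K. real (S_count K F S P g) * (1 / (?D * (real g - 1))))"
    unfolding S_count_def by (rule sum_group_by_value) (use card_occ_bounds in auto)
  finally show ?thesis
    by simp
qed

end

theorem theorem1:
  fixes K F S Lam :: nat
    and P :: "nat \<Rightarrow> nat \<Rightarrow> nat option"
    and M Conn :: "nat \<Rightarrow> nat set"
    and r :: real
  assumes "is_MRA K F S P"
    and "madc_model K F Lam M Conn"
    and "r = comp_load F Lam M"
    and "\<forall>k<K. {f. f < F \<and> P f k = None} \<subseteq> access M Conn k"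
  shows "madc_achievable K F Lam M Conn
           (real S / (real K * real F)
            + (\<Sum>g = 2..K. real (S_count K F S P g) / (real K * real F * (real g - 1))))"
proof -
  have mra: "mra K F S P"
    using assms(1) by (rule mra.intro)
  interpret mra K F S P
    by (fact mra)
  have code: "mra_code K F S P w (fact K)" if w: "\<forall>k<K. w k < K" for w
  proof (intro mra_code.intro[OF mra] mra_code_axioms.intro)
    show "w k < K" if "k < K" for k
      using w that by blast
    show "card (occ K F P s) - 1 dvd fact K" if "s < S" for s
      using card_occ_bounds[OF that] by (intro dvd_fact) auto
  qed
  show ?thesis
    apply (rule madc_achievable_one_function_per_reducer[where t = "fact K"
          and l = "\<lambda>w j. mra_code.offset K F P (fact K) j S"
          and enc = "\<lambda>w. mra_code.encode K F S P w (fact K)"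
          and dec = "\<lambda>w. mra_code.decode K F P w (fact K)"])
    subgoal by simp
    subgoal for w by (rule mra_code.length_encode[OF code])
    subgoal for w by (rule mra_code.decode_correct[OF code _ assms(4)]) auto
    subgoal for w by (rule mra_code.normalized_load[OF code, symmetric]) simp_all
    done
qed

end
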